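(* Let $n,d,t$ be integers with $2\le d\le n-3$ and $2\le t\le d$. Let $G=G_{n,d,t}$, with path $P=v_1\dots v_{d+1}$ as in its construction, and let $w$ be a vertex of $G$ not on $P$. Then $\mu_{n-d}(G-v_iw)<n-d+2$ for each $i\in\{t-1,t,t+1\}$.
   Context: For a graph $G$ of order $n$, $\mu_1(G)\ge\dots\ge\mu_n(G)$ denote the eigenvalues of the Laplacian matrix $L(G)=D(G)-A(G)$; $G-e$ denotes deletion of edge $e$. $G_{n,d,t}$ is the graph obtained from a path $P=v_1v_2\dots v_{d+1}$ and a vertex-disjoint complete graph $K_{n-d-1}$ by adding all edges between every vertex of $K_{n-d-1}$ and each of $v_{t-1},v_t,v_{t+1}$. *)

theory Defs
  imports "Jordan_Normal_Form.Char_Poly"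
begin

text \<open>Simple graphs on the vertex set {0..<n}, given by a symmetric irreflexive
adjacency predicate.\<close>

definition laplacian :: "nat \<Rightarrow> (nat \<Rightarrow> nat \<Rightarrow> bool) \<Rightarrow> real mat" where
  "laplacian n adj = mat n n (\<lambda>(i,j).
     if i = j then real (card {k \<in> {0..<n}. adj i k})
     else if adj i j then -1 else 0)"

text \<open>Eigenvalues (with multiplicity) of a real matrix whose characteristic
polynomial splits over the reals (true for symmetric matrices such as Laplacians),
listed in non-increasing order.\<close>

definition eigenvalues_desc :: "real mat \<Rightarrow> real list" where
  "eigenvalues_desc A = rev (sort (SOME es. char_poly A = prod_list (map (\<lambda>e. [:-e, 1:]) es)))"

definition lap_mu :: "nat \<Rightarrow> (nat \<Rightarrow> nat \<Rightarrow> bool) \<Rightarrow> nat \<Rightarrow> real" where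
  "lap_mu n adj k = eigenvalues_desc (laplacian n adj) ! (k - 1)"

text \<open>Path vertex v_i (i = 1..d+1) is the number i-1; the clique K_{n-d-1}
consists of the vertices d+1, ..., n-1.\<close>
definition pv :: "nat \<Rightarrow> nat" where "pv i = i - 1"

definition G_ndt :: "nat \<Rightarrow> nat \<Rightarrow> nat \<Rightarrow> nat \<Rightarrow> nat \<Rightarrow> bool" where
  "G_ndt n d t a b \<longleftrightarrow> a < n \<and> b < n \<and> a \<noteq> b \<and>
     ((a \<le> d \<and> b \<le> d \<and> (a = b + 1 \<or> b = a + 1))
      \<or> (d < a \<and> d < b)
      \<or> (d < a \<and> b \<in> {pv (t-1), pv t, pv (t+1)})
      \<or> (d < b \<and> a \<in> {pv (t-1), pv t, pv (t+1)}))"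

definition delete_edge :: "(nat \<Rightarrow> nat \<Rightarrow> bool) \<Rightarrow> nat \<Rightarrow> nat \<Rightarrow> nat \<Rightarrow> nat \<Rightarrow> bool" where
  "delete_edge adj x y a b \<longleftrightarrow> adj a b \<and> \<not> ((a = x \<and> b = y) \<or> (a = y \<and> b = x))"

end

(*
  Courant-Fischer reduces the claim to a (d+1)-dimensional space of test vectors on which
  x^T L x < (k + 3) |x|^2, where k = n - d - 1 is the size of the clique and L the Laplacian of
  G - v_i w: the n - d top eigenvectors span a space on which the Rayleigh quotient is at least
  mu_{n-d}, and the two spaces meet.  A test vector vanishes at v_t, takes opposite values s, -s
  at v_{t-1}, v_{t+1}, the value y at w and z on the rest of the clique, and is arbitrary on the
  other path vertices.  Expanding the quadratic form gives
    x^T L x - (k+3)|x|^2 = E_P - (k+3)|x_P|^2 + 2 k s^2 - (y + (k-1) z)^2 - (y - x(v_i))^2,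
  where E_P and |x_P|^2 are the energy and squared norm on the path, and a weighted AM-GM
  bound on the path edges shows E_P - (k+3)|x_P|^2 + 2 k s^2 <= -|x_P|^2/4.
*)
theory Submission
  imports Defs "Jordan_Normal_Form.Schur_Decomposition"
begin

section \<open>Real vectors as functions\<close>

text \<open>Vectors of \<open>\<real>\<^sup>n\<close> are functions \<open>nat \<Rightarrow> real\<close> of which only the values below
  \<open>n\<close> matter; this keeps the graph computations free of carrier bookkeeping.\<close>

definition dot_fun :: "nat \<Rightarrow> (nat \<Rightarrow> real) \<Rightarrow> (nat \<Rightarrow> real) \<Rightarrow> real" where
  "dot_fun n x y = (\<Sum>i<n. x i * y i)"

definition mult_mat_fun :: "nat \<Rightarrow> real mat \<Rightarrow> (nat \<Rightarrow> real) \<Rightarrow> nat \<Rightarrow> real" where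
  "mult_mat_fun n A x i = (\<Sum>j<n. A $$ (i,j) * x j)"

definition quad_form :: "nat \<Rightarrow> real mat \<Rightarrow> (nat \<Rightarrow> real) \<Rightarrow> real" where
  "quad_form n A x = dot_fun n x (mult_mat_fun n A x)"

definition lincomb_fun :: "nat \<Rightarrow> (nat \<Rightarrow> real) \<Rightarrow> (nat \<Rightarrow> nat \<Rightarrow> real) \<Rightarrow> nat \<Rightarrow> real" where
  "lincomb_fun r a p i = (\<Sum>j<r. a j * p j i)"

lemma dot_fun_commute: "dot_fun n x y = dot_fun n y x"
  unfolding dot_fun_def by (simp add: mult.commute)

lemma dot_fun_cong:
  "(\<And>i. i < n \<Longrightarrow> x i = x' i) \<Longrightarrow> (\<And>i. i < n \<Longrightarrow> y i = y' i) \<Longrightarrow> dot_fun n x y = dot_fun n x' y'"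
  unfolding dot_fun_def by (rule sum.cong) auto

lemma mult_mat_fun_cong: "(\<And>i. i < n \<Longrightarrow> x i = x' i) \<Longrightarrow> mult_mat_fun n A x = mult_mat_fun n A x'"
  unfolding mult_mat_fun_def by (intro ext sum.cong) auto

lemma quad_form_cong: "(\<And>i. i < n \<Longrightarrow> x i = x' i) \<Longrightarrow> quad_form n A x = quad_form n A x'"
  unfolding quad_form_def by (simp add: mult_mat_fun_cong[of n x x' A] cong: dot_fun_cong)

lemma dot_fun_self_nonneg: "0 \<le> dot_fun n x x"
  unfolding dot_fun_def by (auto intro: sum_nonneg)

lemma dot_fun_self_eq_0: "dot_fun n x x = 0 \<Longrightarrow> i < n \<Longrightarrow> x i = 0"
  unfolding dot_fun_def by (subst (asm) sum_nonneg_eq_0_iff) auto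

lemma dot_fun_scale_right: "dot_fun n x (\<lambda>i. s * y i) = s * dot_fun n x y"
  unfolding dot_fun_def by (simp add: sum_distrib_left mult.left_commute)

lemma dot_fun_diff_right: "dot_fun n x (\<lambda>i. y i - z i) = dot_fun n x y - dot_fun n x z"
  unfolding dot_fun_def by (simp add: right_diff_distrib sum_subtractf)

lemma mult_mat_fun_diff: "mult_mat_fun n A (\<lambda>i. y i - z i) i = mult_mat_fun n A y i - mult_mat_fun n A z i"
  unfolding mult_mat_fun_def by (simp add: right_diff_distrib sum_subtractf)

lemma dot_fun_mult_mat_fun_symmetric:
  assumes sym: "\<And>i j. i < n \<Longrightarrow> j < n \<Longrightarrow> A $$ (i,j) = A $$ (j,i)"
  shows "dot_fun n x (mult_mat_fun n A y) = dot_fun n (mult_mat_fun n A x) y"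
proof -
  have "dot_fun n x (mult_mat_fun n A y) = (\<Sum>i<n. \<Sum>j<n. x i * A $$ (i,j) * y j)"
    unfolding dot_fun_def mult_mat_fun_def by (simp add: sum_distrib_left mult.assoc)
  also have "\<dots> = (\<Sum>j<n. \<Sum>i<n. x i * A $$ (i,j) * y j)" by (rule sum.swap)
  also have "\<dots> = dot_fun n (mult_mat_fun n A x) y"
    unfolding dot_fun_def mult_mat_fun_def
    by (auto simp: sum_distrib_left sum_distrib_right sym ac_simps intro!: sum.cong)
  finally show ?thesis .
qed

lemma dot_fun_lincomb_left: "dot_fun n (lincomb_fun r a u) y = (\<Sum>l<r. a l * dot_fun n (u l) y)"
  unfolding dot_fun_def lincomb_fun_def
  by (simp add: sum_distrib_left sum_distrib_right mult.assoc sum.swap[of _ "{..<n}"])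

lemma dot_fun_lincomb_right: "dot_fun n y (lincomb_fun r a u) = (\<Sum>l<r. a l * dot_fun n y (u l))"
  using dot_fun_lincomb_left[of n r a u y] by (simp add: dot_fun_commute)

lemma mult_mat_fun_lincomb:
  "mult_mat_fun n A (lincomb_fun r a u) i = lincomb_fun r a (\<lambda>l. mult_mat_fun n A (u l)) i"
  unfolding mult_mat_fun_def lincomb_fun_def
  by (simp add: sum_distrib_left mult.left_commute sum.swap[of _ "{..<n}"])

lemma lincomb_fun_lincomb_fun:
  "lincomb_fun r a (\<lambda>j. lincomb_fun s (b j) u) = lincomb_fun s (\<lambda>l. \<Sum>j<r. a j * b j l) u"
  unfolding lincomb_fun_def
  by (simp add: sum_distrib_left sum_distrib_right mult.assoc sum.swap[of _ "{..<r}"])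

lemma lincomb_fun_cong: "(\<And>j. j < r \<Longrightarrow> p j = q j) \<Longrightarrow> lincomb_fun r a p = lincomb_fun r a q"
  unfolding lincomb_fun_def by (intro ext sum.cong) auto

lemma lincomb_fun_Suc_upd:
  "lincomb_fun (Suc r) (a(r := x)) (u(r := v)) = (\<lambda>i. lincomb_fun r a u i + x * v i)"
  unfolding lincomb_fun_def by (intro ext) (simp add: lessThan_Suc add.commute)

lemma sum_mult_of_bool_eq:
  fixes j r :: nat
  assumes "j < r"
  shows "(\<Sum>l<r. b l * of_bool (j = l)) = (b j :: real)"
proof -
  have "(\<Sum>l<r. b l * of_bool (j = l)) = (\<Sum>l\<in>{j}. b l * of_bool (j = l))"
    using assms by (intro sum.mono_neutral_right) auto
  then show ?thesis by simp
qed
lemma dot_fun_lincomb_orthogonal: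
  assumes orth: "\<And>j l. j < r \<Longrightarrow> l < r \<Longrightarrow> l \<noteq> j \<Longrightarrow> dot_fun n (u l) (u j) = 0"
    and m: "m < r"
  shows "dot_fun n (u m) (lincomb_fun r a u) = a m * dot_fun n (u m) (u m)"
proof -
  have "dot_fun n (u m) (lincomb_fun r a u) = (\<Sum>l<r. a l * dot_fun n (u m) (u l))"
    by (rule dot_fun_lincomb_right)
  also have "\<dots> = (\<Sum>l\<in>{m}. a l * dot_fun n (u m) (u l))"
    using m orth by (intro sum.mono_neutral_right) auto
  finally show ?thesis by simp
qed

lemma lincomb_fun_orthogonal_eq_0:
  assumes orth: "\<And>j l. j < r \<Longrightarrow> l < r \<Longrightarrow> l \<noteq> j \<Longrightarrow> dot_fun n (u l) (u j) = 0"
    and perp: "\<And>m. m < r \<Longrightarrow> dot_fun n (u m) (lincomb_fun r a u) = 0"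
    and i: "i < n"
  shows "lincomb_fun r a u i = 0"
proof -
  have "a m * u m i = 0" if m: "m < r" for m
  proof -
    have "a m * dot_fun n (u m) (u m) = 0"
      using perp[OF m] dot_fun_lincomb_orthogonal[of r n u m a, OF orth m] by simp
    then show ?thesis using dot_fun_self_eq_0[OF _ i, of "u m"] by auto
  qed
  then show ?thesis unfolding lincomb_fun_def by (intro sum.neutral) simp
qed

lemma orthogonal_projection_residual_perp:
  assumes orth: "\<And>j l. j < r \<Longrightarrow> l < r \<Longrightarrow> l \<noteq> j \<Longrightarrow> dot_fun n (u l) (u j) = 0"
    and m: "m < r"
  shows "dot_fun n (u m) (\<lambda>i. p i - lincomb_fun r (\<lambda>l. dot_fun n (u l) p / dot_fun n (u l) (u l)) u i) = 0"
proof (cases "dot_fun n (u m) (u m) = 0")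
  case True
  then show ?thesis unfolding dot_fun_def using dot_fun_self_eq_0[OF True] by simp
next
  case False
  have "dot_fun n (u m) (\<lambda>i. p i - lincomb_fun r a u i) = dot_fun n (u m) p - a m * dot_fun n (u m) (u m)"
    for a
    using dot_fun_diff_right[of n "u m" p "lincomb_fun r a u"]
      dot_fun_lincomb_orthogonal[of r n u m a, OF orth m] by simp
  with False show ?thesis
    by simp
qed

section \<open>Symmetric matrices: eigenbasis and Courant--Fischer\<close>

text \<open>A Gram--Schmidt step for a vector \<open>p\<close> that is an eigenvector modulo the span of the
  orthogonal eigenvectors \<open>u l\<close>: for the residual \<open>v\<close> of its projection, \<open>A v - s v\<close> lies in
  that span and, \<open>A\<close> being symmetric, is orthogonal to it, so it vanishes.\<close>

lemma orthogonal_eigenvector_step: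
  assumes sym: "\<And>i j. i < n \<Longrightarrow> j < n \<Longrightarrow> A $$ (i,j) = A $$ (j,i)"
    and orth: "\<And>j l. j < r \<Longrightarrow> l < r \<Longrightarrow> l \<noteq> j \<Longrightarrow> dot_fun n (u l) (u j) = 0"
    and eig: "\<And>j i. j < r \<Longrightarrow> i < n \<Longrightarrow> mult_mat_fun n A (u j) i = t j * u j i"
    and p: "\<And>i. i < n \<Longrightarrow> mult_mat_fun n A p i = s * p i + lincomb_fun r g u i"
  obtains a where "\<And>j. j < r \<Longrightarrow> dot_fun n (u j) (\<lambda>i. p i - lincomb_fun r a u i) = 0"
    and "\<And>i. i < n \<Longrightarrow>
      mult_mat_fun n A (\<lambda>i. p i - lincomb_fun r a u i) i = s * (p i - lincomb_fun r a u i)"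
proof -
  define a where "a l = dot_fun n (u l) p / dot_fun n (u l) (u l)" for l
  define v where "v i = p i - lincomb_fun r a u i" for i
  have perp: "dot_fun n (u m) v = 0" if "m < r" for m
    unfolding v_def[abs_def] a_def using orth that by (rule orthogonal_projection_residual_perp)
  define e where "e i = mult_mat_fun n A v i - s * v i" for i
  define \<delta> where "\<delta> l = g l + (s - t l) * a l" for l
  have e_span: "e i = lincomb_fun r \<delta> u i" if i: "i < n" for i
  proof -
    have "mult_mat_fun n A (lincomb_fun r a u) i = lincomb_fun r (\<lambda>l. a l * t l) u i"
      unfolding mult_mat_fun_lincomb lincomb_fun_def using eig i by (auto intro: sum.cong)
    then show ?thesis
      unfolding e_def v_def mult_mat_fun_diff p[OF i] \<delta>_def
      by (simp add: lincomb_fun_def algebra_simps sum.distrib sum_subtractf sum_distrib_left)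
  qed
  have "dot_fun n (u m) (lincomb_fun r \<delta> u) = 0" if m: "m < r" for m
  proof -
    have "dot_fun n (u m) (mult_mat_fun n A v) = dot_fun n (mult_mat_fun n A (u m)) v"
      by (rule dot_fun_mult_mat_fun_symmetric[OF sym])
    also have "\<dots> = dot_fun n (\<lambda>i. t m * u m i) v"
      using eig m by (intro dot_fun_cong) auto
    finally have "dot_fun n (u m) e = 0"
      unfolding e_def dot_fun_diff_right dot_fun_scale_right
      using perp[OF m] by (simp add: dot_fun_commute[of n _ v] dot_fun_scale_right)
    then show ?thesis
      using dot_fun_cong[of n "u m" "u m" e "lincomb_fun r \<delta> u"] e_span by simp
  qed
  then have "e i = 0" if "i < n" for i
    using lincomb_fun_orthogonal_eq_0[OF orth _ that] e_span[OF that] by simp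
  then show ?thesis using that[of a] perp unfolding e_def v_def by simp
qed

lemma orthogonal_eigenbasis_extend:
  assumes orth: "\<And>j l. j < r \<Longrightarrow> l < r \<Longrightarrow> l \<noteq> j \<Longrightarrow> dot_fun n (u l) (u j) = 0"
    and eig: "\<And>j i. j < r \<Longrightarrow> i < n \<Longrightarrow> mult_mat_fun n A (u j) i = t j * u j i"
    and perp: "\<And>j. j < r \<Longrightarrow> dot_fun n (u j) v = 0"
    and eig_v: "\<And>i. i < n \<Longrightarrow> mult_mat_fun n A v i = t r * v i"
  shows "\<And>j l. j < Suc r \<Longrightarrow> l < Suc r \<Longrightarrow> l \<noteq> j \<Longrightarrow> dot_fun n ((u(r := v)) l) ((u(r := v)) j) = 0"
    and "\<And>j i. j < Suc r \<Longrightarrow> i < n \<Longrightarrow> mult_mat_fun n A ((u(r := v)) j) i = t j * (u(r := v)) j i"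
proof -
  have "dot_fun n v (u m) = 0" if "m < r" for m
    using perp[OF that] dot_fun_commute[of n "u m" v] by simp
  then show "dot_fun n ((u(r := v)) l) ((u(r := v)) j) = 0"
    if "j < Suc r" "l < Suc r" "l \<noteq> j" for j l
    using that orth perp by (cases "j = r"; cases "l = r") auto
  show "mult_mat_fun n A ((u(r := v)) j) i = t j * (u(r := v)) j i" if "j < Suc r" "i < n" for j i
    using that eig eig_v by (auto simp: less_Suc_eq)
qed

lemma triangular_family_orthogonal_eigenbasis:
  assumes sym: "\<And>i j. i < n \<Longrightarrow> j < n \<Longrightarrow> A $$ (i,j) = A $$ (j,i)"
    and tri: "\<And>j. j < r \<Longrightarrow> \<exists>g. \<forall>i<n. mult_mat_fun n A (p j) i = t j * p j i + lincomb_fun j g p i"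
  shows "\<exists>u. (\<forall>j<r. \<forall>l<r. l \<noteq> j \<longrightarrow> dot_fun n (u l) (u j) = 0)
           \<and> (\<forall>j<r. \<forall>i<n. mult_mat_fun n A (u j) i = t j * u j i)
           \<and> (\<forall>j<r. \<exists>\<beta>. p j = lincomb_fun r \<beta> u)"
  using tri
proof (induction r)
  case 0
  then show ?case by simp
next
  case (Suc r)
  then obtain u B where orth: "\<And>j l. j < r \<Longrightarrow> l < r \<Longrightarrow> l \<noteq> j \<Longrightarrow> dot_fun n (u l) (u j) = 0"
    and eig: "\<And>j i. j < r \<Longrightarrow> i < n \<Longrightarrow> mult_mat_fun n A (u j) i = t j * u j i"
    and B: "\<And>j. j < r \<Longrightarrow> p j = lincomb_fun r (B j) u"
    by (metis less_SucI)
  obtain g where g: "\<forall>i<n. mult_mat_fun n A (p r) i = t r * p r i + lincomb_fun r g p i"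
    using Suc.prems[of r] by blast
  have "lincomb_fun r g p = lincomb_fun r (\<lambda>l. \<Sum>j<r. g j * B j l) u"
    using lincomb_fun_cong[of r p "\<lambda>j. lincomb_fun r (B j) u" g] B
    by (simp add: lincomb_fun_lincomb_fun)
  with g have p_r: "\<And>i. i < n \<Longrightarrow>
      mult_mat_fun n A (p r) i = t r * p r i + lincomb_fun r (\<lambda>l. \<Sum>j<r. g j * B j l) u i"
    by simp
  obtain a where
    perp: "\<And>j. j < r \<Longrightarrow> dot_fun n (u j) (\<lambda>i. p r i - lincomb_fun r a u i) = 0" and
    eig_v: "\<And>i. i < n \<Longrightarrow> mult_mat_fun n A (\<lambda>i. p r i - lincomb_fun r a u i) i
      = t r * (p r i - lincomb_fun r a u i)"
    using orthogonal_eigenvector_step[OF sym orth eig p_r] by blast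
  define v where "v = (\<lambda>i. p r i - lincomb_fun r a u i)"
  have perp_v: "\<And>j. j < r \<Longrightarrow> dot_fun n (u j) v = 0"
    and eig_v: "\<And>i. i < n \<Longrightarrow> mult_mat_fun n A v i = t r * v i"
    using perp eig_v unfolding v_def by auto
  have "\<forall>j<Suc r. \<exists>\<beta>. p j = lincomb_fun (Suc r) \<beta> (u(r := v))"
  proof (intro allI impI)
    fix j assume j: "j < Suc r"
    show "\<exists>\<beta>. p j = lincomb_fun (Suc r) \<beta> (u(r := v))"
    proof (cases "j = r")
      case True
      show ?thesis
        by (rule exI[of _ "a(r := 1)"]) (simp add: lincomb_fun_Suc_upd v_def True)
    next
      case False
      then show ?thesis
        using B[of j] j by (intro exI[of _ "(B j)(r := 0)"]) (simp add: lincomb_fun_Suc_upd)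
    qed
  qed
  with orthogonal_eigenbasis_extend[of r n u A t v, OF orth eig perp_v eig_v] show ?case
    by blast
qed

lemma triangular_family_rayleigh_ge:
  assumes sym: "\<And>i j. i < n \<Longrightarrow> j < n \<Longrightarrow> A $$ (i,j) = A $$ (j,i)"
    and tri: "\<And>j. j < r \<Longrightarrow> \<exists>g. \<forall>i<n. mult_mat_fun n A (p j) i = t j * p j i + lincomb_fun j g p i"
    and ge: "\<And>j. j < r \<Longrightarrow> c \<le> t j"
  shows "c * dot_fun n (lincomb_fun r a p) (lincomb_fun r a p) \<le> quad_form n A (lincomb_fun r a p)"
proof -
  obtain u where orth: "\<forall>j<r. \<forall>l<r. l \<noteq> j \<longrightarrow> dot_fun n (u l) (u j) = 0"
    and eig: "\<forall>j<r. \<forall>i<n. mult_mat_fun n A (u j) i = t j * u j i"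
    and span: "\<forall>j<r. \<exists>\<beta>. p j = lincomb_fun r \<beta> u"
    using triangular_family_orthogonal_eigenbasis[OF sym tri] by blast
  obtain B where B: "\<And>j. j < r \<Longrightarrow> p j = lincomb_fun r (B j) u"
    using span by metis
  define g where "g l = (\<Sum>j<r. a j * B j l)" for l
  define N where "N l = dot_fun n (u l) (u l)" for l
  have x: "lincomb_fun r a p = lincomb_fun r g u"
    unfolding g_def using lincomb_fun_cong[of r p "\<lambda>j. lincomb_fun r (B j) u" a] B
    by (simp add: lincomb_fun_lincomb_fun g_def)
  have Ax: "mult_mat_fun n A (lincomb_fun r g u) i = lincomb_fun r (\<lambda>l. g l * t l) u i"
    if "i < n" for i
    unfolding mult_mat_fun_lincomb lincomb_fun_def using eig that by (auto intro: sum.cong)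
  have "quad_form n A (lincomb_fun r g u) = (\<Sum>l<r. g l * dot_fun n (u l) (lincomb_fun r (\<lambda>l. g l * t l) u))"
    unfolding quad_form_def dot_fun_lincomb_left using Ax by (simp cong: dot_fun_cong)
  also have "\<dots> = (\<Sum>l<r. t l * (g l * g l * N l))"
    using orth by (intro sum.cong) (auto simp: dot_fun_lincomb_orthogonal N_def)
  finally have quad: "quad_form n A (lincomb_fun r g u) = (\<Sum>l<r. t l * (g l * g l * N l))" .
  have norm: "dot_fun n (lincomb_fun r g u) (lincomb_fun r g u) = (\<Sum>l<r. g l * g l * N l)"
    unfolding dot_fun_lincomb_left
    using orth by (intro sum.cong) (auto simp: dot_fun_lincomb_orthogonal N_def)
  have "c * (\<Sum>l<r. g l * g l * N l) \<le> (\<Sum>l<r. t l * (g l * g l * N l))"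
    unfolding sum_distrib_left
    using ge dot_fun_self_nonneg by (intro sum_mono mult_right_mono) (auto simp: N_def)
  then show ?thesis unfolding x quad norm .
qed

interpretation of_real_poly_hom: map_poly_inj_idom_hom "of_real :: real \<Rightarrow> complex" ..

lemma real_symmetric_eigenvalue_real:
  fixes A :: "real mat"
  assumes A: "A \<in> carrier_mat n n"
    and sym: "\<And>i j. i < n \<Longrightarrow> j < n \<Longrightarrow> A $$ (i,j) = A $$ (j,i)"
    and ev: "eigenvalue (map_mat complex_of_real A) a"
  shows "Im a = 0"
proof -
  obtain v where v: "v \<in> carrier_vec n" "v \<noteq> 0\<^sub>v n"
    and Av: "map_mat complex_of_real A *\<^sub>v v = a \<cdot>\<^sub>v v"
    using ev A unfolding eigenvalue_def eigenvector_def by auto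
  have comp: "(\<Sum>j<n. of_real (A $$ (i,j)) * v $ j) = a * v $ i" if i: "i < n" for i
    using arg_cong[OF Av, of "\<lambda>w. w $ i"] i A v
    by (auto simp: scalar_prod_def atLeast0LessThan)
  \<comment> \<open>\<open>s = v\<^sup>* A v\<close> is real by symmetry and equals \<open>a |v|\<^sup>2\<close>.\<close>
  define s where "s = (\<Sum>i<n. cnj (v $ i) * (\<Sum>j<n. of_real (A $$ (i,j)) * v $ j))"
  define N where "N = (\<Sum>i<n. cnj (v $ i) * v $ i)"
  have s_eq: "s = a * N"
    unfolding s_def N_def using comp by (simp add: sum_distrib_left mult.left_commute)
  have "cnj s = (\<Sum>i<n. \<Sum>j<n. v $ i * (of_real (A $$ (i,j)) * cnj (v $ j)))"
    unfolding s_def by (simp add: sum_distrib_left)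
  also have "\<dots> = (\<Sum>j<n. \<Sum>i<n. v $ i * (of_real (A $$ (i,j)) * cnj (v $ j)))"
    by (rule sum.swap)
  also have "\<dots> = s"
    unfolding s_def by (auto simp: sum_distrib_left sym ac_simps intro!: sum.cong)
  finally have "Im s = 0"
    by (metis Reals_cnj_iff complex_is_Real_iff)
  have N_eq: "N = of_real (\<Sum>i<n. (cmod (v $ i))\<^sup>2)"
    unfolding N_def of_real_sum complex_norm_square by (simp add: mult.commute)
  obtain i where i: "i < n" "v $ i \<noteq> 0"
    using v by (metis eq_vecI index_zero_vec(1,2) carrier_vecD)
  have "0 < (\<Sum>i<n. (cmod (v $ i))\<^sup>2)"
    using i by (intro sum_pos2[of _ i]) auto
  with \<open>Im s = 0\<close> show ?thesis
    unfolding s_eq N_eq by simp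
qed

lemma char_poly_real_symmetric_splits:
  fixes A :: "real mat"
  assumes A: "A \<in> carrier_mat n n"
    and sym: "\<And>i j. i < n \<Longrightarrow> j < n \<Longrightarrow> A $$ (i,j) = A $$ (j,i)"
  shows "\<exists>es. char_poly A = (\<Prod>e\<leftarrow>es. [:-e, 1:])"
proof -
  define C where "C = map_mat complex_of_real A"
  have C: "C \<in> carrier_mat n n" using A unfolding C_def by simp
  obtain as where C_split: "char_poly C = (\<Prod>a\<leftarrow>as. [:- a, 1:])"
    using char_poly_factorized[OF C] by blast
  have real: "Im a = 0" if "a \<in> set as" for a
  proof (rule real_symmetric_eigenvalue_real[OF A sym])
    have "poly (char_poly C) a = 0" unfolding C_split using that by (rule linear_poly_root)
    then show "eigenvalue (map_mat complex_of_real A) a"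
      using eigenvalue_root_char_poly[OF C] unfolding C_def by simp
  qed
  have "map_poly complex_of_real (\<Prod>e\<leftarrow>map Re as. [:-e, 1:]) = (\<Prod>a\<leftarrow>as. [:- a, 1:])"
    unfolding of_real_poly_hom.hom_prod_list map_map o_def
    using real by (intro arg_cong[where f = prod_list] map_cong) (auto simp: complex_eq_iff)
  also have "\<dots> = map_poly complex_of_real (char_poly A)"
    unfolding C_split[symmetric] C_def by (rule of_real_hom.char_poly_hom[OF A])
  finally show ?thesis
    by (intro exI[of _ "map Re as"]) simp
qed

lemma char_poly_eigenvalues_desc:
  fixes A :: "real mat"
  assumes A: "A \<in> carrier_mat n n"
    and sym: "\<And>i j. i < n \<Longrightarrow> j < n \<Longrightarrow> A $$ (i,j) = A $$ (j,i)"
  shows "char_poly A = (\<Prod>e\<leftarrow>eigenvalues_desc A. [:-e, 1:])"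
    and "length (eigenvalues_desc A) = n"
proof -
  define es where "es = (SOME es. char_poly A = (\<Prod>e\<leftarrow>es. [:-e, 1:]))"
  have es: "char_poly A = (\<Prod>e\<leftarrow>es. [:-e, 1:])"
    unfolding es_def using char_poly_real_symmetric_splits[OF A sym] by (rule someI_ex)
  have ev: "eigenvalues_desc A = rev (sort es)"
    unfolding eigenvalues_desc_def es_def ..
  have "mset (map (\<lambda>e. [:-e, 1:]) (eigenvalues_desc A)) = mset (map (\<lambda>e. [:-e, 1::real:]) es)"
    unfolding ev by simp
  then show "char_poly A = (\<Prod>e\<leftarrow>eigenvalues_desc A. [:-e, 1:])"
    unfolding es by (metis prod_mset_prod_list)
  then show "length (eigenvalues_desc A) = n"
    using degree_monic_char_poly[OF A] degree_linear_factors by metis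
qed

lemma eigenvalues_desc_antimono:
  "i \<le> j \<Longrightarrow> j < length (eigenvalues_desc A) \<Longrightarrow> eigenvalues_desc A ! j \<le> eigenvalues_desc A ! i"
  unfolding eigenvalues_desc_def by (auto simp: rev_nth intro!: sorted_nth_mono)

lemma index_mult_mat_square:
  assumes "A \<in> carrier_mat n n" "B \<in> carrier_mat n n" "i < n" "j < n"
  shows "(A * B) $$ (i,j) = (\<Sum>k<n. A $$ (i,k) * B $$ (k,j))"
  using assms by (simp add: scalar_prod_def atLeast0LessThan)

lemma schur_columns_triangular:
  fixes A B P :: "real mat"
  assumes A: "A \<in> carrier_mat n n" and B: "B \<in> carrier_mat n n" and P: "P \<in> carrier_mat n n"
    and AP: "A * P = P * B" and ut: "upper_triangular B"
    and j: "j < n" and i: "i < n"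
  shows "mult_mat_fun n A (\<lambda>i. P $$ (i,j)) i
    = B $$ (j,j) * P $$ (i,j) + lincomb_fun j (\<lambda>l. B $$ (l,j)) (\<lambda>l i. P $$ (i,l)) i"
proof -
  have "mult_mat_fun n A (\<lambda>i. P $$ (i,j)) i = (\<Sum>l<n. P $$ (i,l) * B $$ (l,j))"
    using index_mult_mat_square[OF A P i j] index_mult_mat_square[OF P B i j]
    unfolding mult_mat_fun_def AP by simp
  also have "\<dots> = (\<Sum>l<Suc j. P $$ (i,l) * B $$ (l,j))"
    using ut B j by (intro sum.mono_neutral_right) (auto simp: upper_triangular_def)
  finally show ?thesis
    unfolding lincomb_fun_def by (simp add: mult.commute)
qed

lemma columns_independent_if_left_invertible:
  fixes P Q :: "real mat"
  assumes P: "P \<in> carrier_mat n n" and Q: "Q \<in> carrier_mat n n" and QP: "Q * P = 1\<^sub>m n"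
    and r: "r \<le> n" and zero: "\<And>i. i < n \<Longrightarrow> lincomb_fun r a (\<lambda>l i. P $$ (i,l)) i = 0"
    and j: "j < r"
  shows "a j = 0"
proof -
  define x where "x = vec n (\<lambda>k. if k < r then a k else 0)"
  have "P *\<^sub>v x = 0\<^sub>v n"
  proof (rule eq_vecI)
    fix i assume i: "i < dim_vec (0\<^sub>v n)"
    have "(P *\<^sub>v x) $ i = (\<Sum>k<n. P $$ (i,k) * (if k < r then a k else 0))"
      using P i unfolding x_def by (simp add: scalar_prod_def atLeast0LessThan)
    also have "\<dots> = (\<Sum>k<r. P $$ (i,k) * (if k < r then a k else 0))"
      using r by (intro sum.mono_neutral_right) auto
    finally have "(P *\<^sub>v x) $ i = (\<Sum>k<r. P $$ (i,k) * a k)"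
      by simp
    then show "(P *\<^sub>v x) $ i = 0\<^sub>v n $ i"
      using zero[of i] i unfolding lincomb_fun_def by (simp add: mult.commute)
  qed (use P in simp)
  then have "x = (Q * P) *\<^sub>v x"
    using QP x_def by simp
  also have "\<dots> = Q *\<^sub>v 0\<^sub>v n"
    using P Q \<open>P *\<^sub>v x = 0\<^sub>v n\<close> unfolding x_def
    by (simp add: assoc_mult_mat_vec[of Q n n P n])
  also have "\<dots> = 0\<^sub>v n"
    using Q by (intro eq_vecI) auto
  finally have "x $ j = 0"
    using j r by simp
  then show ?thesis
    using j r unfolding x_def by simp
qed

text \<open>The max-min half of Courant--Fischer: the first \<open>r\<close> columns of a Schur triangularisation
  along the decreasingly sorted spectrum.\<close>

lemma eigenvalues_desc_rayleigh_subspace: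
  fixes A :: "real mat"
  assumes A: "A \<in> carrier_mat n n"
    and sym: "\<And>i j. i < n \<Longrightarrow> j < n \<Longrightarrow> A $$ (i,j) = A $$ (j,i)"
    and r: "0 < r" "r \<le> n"
  obtains p where "\<And>a j. (\<And>i. i < n \<Longrightarrow> lincomb_fun r a p i = 0) \<Longrightarrow> j < r \<Longrightarrow> a j = 0"
    and "\<And>a. eigenvalues_desc A ! (r - 1) * dot_fun n (lincomb_fun r a p) (lincomb_fun r a p)
      \<le> quad_form n A (lincomb_fun r a p)"
proof -
  note cp = char_poly_eigenvalues_desc[OF A sym]
  obtain B P Q where "schur_decomposition A (eigenvalues_desc A) = (B, P, Q)"
    by (cases "schur_decomposition A (eigenvalues_desc A)") auto
  from schur_decomposition[OF A cp(1) this]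
  have sim: "similar_mat_wit A B P Q" and ut: "upper_triangular B"
    and diag: "diag_mat B = eigenvalues_desc A" by auto
  from sim A have B: "B \<in> carrier_mat n n" and P: "P \<in> carrier_mat n n" and Q: "Q \<in> carrier_mat n n"
    and QP: "Q * P = 1\<^sub>m n" and A_eq: "A = P * B * Q"
    unfolding similar_mat_wit_def Let_def by auto
  have AP: "A * P = P * B"
    using A_eq P B Q QP by (simp add: assoc_mult_mat[of _ n n _ n _ n])
  define p where "p j i = P $$ (i,j)" for j i
  have tri: "\<exists>g. \<forall>i<n. mult_mat_fun n A (p j) i = B $$ (j,j) * p j i + lincomb_fun j g p i"
    if "j < r" for j
    using schur_columns_triangular[OF A B P AP ut] that r unfolding p_def[abs_def] by auto
  have diag_nth: "B $$ (j,j) = eigenvalues_desc A ! j" if "j < n" for j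
    using that B unfolding diag[symmetric] diag_mat_def by simp
  have ge: "eigenvalues_desc A ! (r - 1) \<le> B $$ (j,j)" if "j < r" for j
    using diag_nth[of j] eigenvalues_desc_antimono[of j "r - 1" A] cp(2) that r by simp
  show ?thesis
  proof (rule that)
    show "a j = 0" if "\<And>i. i < n \<Longrightarrow> lincomb_fun r a p i = 0" "j < r" for a j
      using columns_independent_if_left_invertible[OF P Q QP r(2)] that unfolding p_def[abs_def] by blast
    show "eigenvalues_desc A ! (r - 1) * dot_fun n (lincomb_fun r a p) (lincomb_fun r a p)
      \<le> quad_form n A (lincomb_fun r a p)" for a
      by (rule triangular_family_rayleigh_ge[OF sym tri ge])
  qed
qed

lemma lincomb_fun_append:
  "lincomb_fun (r + m) a (\<lambda>j. if j < r then p j else q (j - r)) i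
    = lincomb_fun r a p i + lincomb_fun m (\<lambda>l. a (r + l)) q i"
proof (induction m)
  case 0
  show ?case unfolding lincomb_fun_def by (auto intro: sum.cong)
next
  case (Suc m)
  then show ?case unfolding lincomb_fun_def by (simp add: add.assoc)
qed

lemma lincomb_fun_dependent: "\<exists>a. (\<exists>j<Suc n. a j \<noteq> 0) \<and> (\<forall>i<n. lincomb_fun (Suc n) a p i = 0)"
proof -
  define M where "M = mat (Suc n) (Suc n) (\<lambda>(i,j). if i < n then p j i else 0)"
  have M: "M \<in> carrier_mat (Suc n) (Suc n)" unfolding M_def by simp
  have "det M = (\<Sum>j<Suc n. M $$ (n,j) * cofactor M n j)"
    by (rule laplace_expansion_row[OF M]) simp
  also have "\<dots> = 0" unfolding M_def by simp
  finally obtain v where v: "v \<in> carrier_vec (Suc n)" "v \<noteq> 0\<^sub>v (Suc n)" and Mv: "M *\<^sub>v v = 0\<^sub>v (Suc n)"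
    using det_0_iff_vec_prod_zero_field[OF M] by blast
  have "\<exists>j<Suc n. v $ j \<noteq> 0"
    using v by (metis eq_vecI carrier_vecD index_zero_vec(1,2))
  moreover have "lincomb_fun (Suc n) (\<lambda>j. v $ j) p i = 0" if i: "i < n" for i
    using arg_cong[OF Mv, of "\<lambda>w. w $ i"] i v
    unfolding M_def lincomb_fun_def by (simp add: scalar_prod_def atLeast0LessThan mult.commute)
  ultimately show ?thesis by blast
qed

lemma lincomb_fun_families_meet:
  assumes "r + m = Suc n"
  obtains a b where "(\<exists>j<r. a j \<noteq> 0) \<or> (\<exists>l<m. b l \<noteq> 0)"
    and "\<And>i. i < n \<Longrightarrow> lincomb_fun r a p i = lincomb_fun m b q i"
proof -
  obtain a where nz: "\<exists>j<Suc n. a j \<noteq> 0"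
    and dep: "\<forall>i<n. lincomb_fun (Suc n) a (\<lambda>j. if j < r then p j else (\<lambda>i. - q (j - r) i)) i = 0"
    using lincomb_fun_dependent by blast
  show ?thesis
  proof (rule that)
    show "(\<exists>j<r. a j \<noteq> 0) \<or> (\<exists>l<m. a (r + l) \<noteq> 0)"
      using nz assms by (metis add_diff_inverse_nat add_less_cancel_left)
    show "lincomb_fun r a p i = lincomb_fun m (\<lambda>l. a (r + l)) q i" if "i < n" for i
      using dep that lincomb_fun_append[of r m a p "\<lambda>l i. - q l i" i]
      unfolding assms[symmetric] lincomb_fun_def by (simp add: sum_negf)
  qed
qed

lemma eigenvalues_desc_less_if_rayleigh_less:
  fixes A :: "real mat"
  assumes A: "A \<in> carrier_mat n n"
    and sym: "\<And>i j. i < n \<Longrightarrow> j < n \<Longrightarrow> A $$ (i,j) = A $$ (j,i)"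
    and m: "0 < m" "m \<le> n"
    and less: "\<And>b. (\<exists>l<m. b l \<noteq> 0) \<Longrightarrow>
      quad_form n A (lincomb_fun m b q) < c * dot_fun n (lincomb_fun m b q) (lincomb_fun m b q)"
  shows "eigenvalues_desc A ! (n - m) < c"
proof (rule ccontr)
  assume "\<not> ?thesis"
  then have c_le: "c \<le> eigenvalues_desc A ! (n - m)" by simp
  define r where "r = n - m + 1"
  have r: "0 < r" "r \<le> n" "r + m = Suc n" "r - 1 = n - m"
    using m unfolding r_def by auto
  obtain p where indep: "\<And>a j. (\<And>i. i < n \<Longrightarrow> lincomb_fun r a p i = 0) \<Longrightarrow> j < r \<Longrightarrow> a j = 0"
    and ge: "\<And>a. eigenvalues_desc A ! (n - m) * dot_fun n (lincomb_fun r a p) (lincomb_fun r a p)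
      \<le> quad_form n A (lincomb_fun r a p)"
    using eigenvalues_desc_rayleigh_subspace[OF A sym r(1,2)] unfolding r(4) by metis
  obtain a b where nz: "(\<exists>j<r. a j \<noteq> 0) \<or> (\<exists>l<m. b l \<noteq> 0)"
    and eq: "\<And>i. i < n \<Longrightarrow> lincomb_fun r a p i = lincomb_fun m b q i"
    using lincomb_fun_families_meet[OF r(3)] by blast
  show False
  proof (cases "\<exists>l<m. b l \<noteq> 0")
    case True
    have "c * dot_fun n (lincomb_fun r a p) (lincomb_fun r a p) \<le> quad_form n A (lincomb_fun r a p)"
      using ge[of a] c_le dot_fun_self_nonneg by (meson mult_right_mono order_trans)
    with less[OF True] show False
      using eq by (simp cong: quad_form_cong dot_fun_cong)
  next
    case False
    then have "lincomb_fun r a p i = 0" if "i < n" for i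
      using eq[OF that] unfolding lincomb_fun_def by simp
    with indep False nz show False
      by blast
  qed
qed

section \<open>The Laplacian quadratic form\<close>

definition edge_energy :: "(nat \<Rightarrow> nat \<Rightarrow> bool) \<Rightarrow> (nat \<Rightarrow> real) \<Rightarrow> nat set \<Rightarrow> nat set \<Rightarrow> real" where
  "edge_energy adj x A B = (\<Sum>a\<in>A. \<Sum>b\<in>B. if adj a b then (x a - x b)\<^sup>2 else 0)"

lemma edge_energy_Un_left:
  "finite A \<Longrightarrow> finite A' \<Longrightarrow> A \<inter> A' = {} \<Longrightarrow>
    edge_energy adj x (A \<union> A') B = edge_energy adj x A B + edge_energy adj x A' B"
  unfolding edge_energy_def by (rule sum.union_disjoint)

lemma edge_energy_Un_right:
  "finite B \<Longrightarrow> finite B' \<Longrightarrow> B \<inter> B' = {} \<Longrightarrow>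
    edge_energy adj x A (B \<union> B') = edge_energy adj x A B + edge_energy adj x A B'"
  unfolding edge_energy_def by (simp add: sum.union_disjoint sum.distrib)

lemma edge_energy_commute:
  assumes "\<And>a b. adj a b = adj b a"
  shows "edge_energy adj x A B = edge_energy adj x B A"
  unfolding edge_energy_def using assms
  by (subst sum.swap) (auto intro!: sum.cong simp: power2_commute)

lemma laplacian_carrier: "laplacian n adj \<in> carrier_mat n n"
  unfolding laplacian_def by simp

lemma laplacian_symmetric:
  assumes "\<And>a b. adj a b = adj b a"
  shows "i < n \<Longrightarrow> j < n \<Longrightarrow> laplacian n adj $$ (i,j) = laplacian n adj $$ (j,i)"
  using assms unfolding laplacian_def by auto

lemma mult_mat_fun_laplacian:
  assumes irrefl: "\<And>a. \<not> adj a a" and i: "i < n"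
  shows "mult_mat_fun n (laplacian n adj) x i = (\<Sum>j<n. if adj i j then x i - x j else 0)"
proof -
  define deg where "deg = (\<Sum>j<n. if adj i j then 1 else (0::real))"
  have "real (card {j \<in> {0..<n}. adj i j}) = (\<Sum>j\<in>{j \<in> {0..<n}. adj i j}. 1)"
    by simp
  also have "\<dots> = deg"
    unfolding deg_def atLeast0LessThan[symmetric] by (rule sum.inter_filter) simp
  finally have "real (card {j \<in> {0..<n}. adj i j}) = deg" .
  then have "mult_mat_fun n (laplacian n adj) x i
      = (\<Sum>j<n. (if i = j then deg * x i else 0) - (if adj i j then x j else 0))"
    unfolding mult_mat_fun_def laplacian_def using i irrefl by (intro sum.cong) auto
  also have "\<dots> = deg * x i - (\<Sum>j<n. if adj i j then x j else 0)"
    using i by (simp add: sum_subtractf)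
  also have "\<dots> = (\<Sum>j<n. if adj i j then x i - x j else 0)"
    unfolding deg_def
    by (simp add: sum_distrib_right sum_subtractf[symmetric] if_distrib of_bool_def cong: if_cong)
  finally show ?thesis .
qed

lemma quad_form_laplacian:
  assumes irrefl: "\<And>a. \<not> adj a a" and sym: "\<And>a b. adj a b = adj b a"
  shows "2 * quad_form n (laplacian n adj) x = edge_energy adj x {..<n} {..<n}"
proof -
  define S where "S = (\<Sum>a<n. \<Sum>b<n. if adj a b then x a * x a - x a * x b else 0)"
  have "mult_mat_fun n (laplacian n adj) x i = (\<Sum>j<n. if adj i j then x i - x j else 0)"
    if "i < n" for i
    using irrefl that by (rule mult_mat_fun_laplacian)
  then have "quad_form n (laplacian n adj) x = S"
    unfolding quad_form_def dot_fun_def S_def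
    by (auto simp: sum_distrib_left right_diff_distrib if_distrib intro!: sum.cong cong: if_cong)
  moreover have "S = (\<Sum>a<n. \<Sum>b<n. if adj a b then x b * x b - x a * x b else 0)"
    unfolding S_def using sym
    by (subst sum.swap) (auto intro!: sum.cong simp: mult.commute)
  ultimately have "2 * quad_form n (laplacian n adj) x
      = (\<Sum>a<n. \<Sum>b<n. (if adj a b then x a * x a - x a * x b else 0)
          + (if adj a b then x b * x b - x a * x b else 0))"
    unfolding S_def by (simp add: sum.distrib)
  also have "\<dots> = edge_energy adj x {..<n} {..<n}"
    unfolding edge_energy_def by (intro sum.cong) (auto simp: power2_eq_square algebra_simps)
  finally show ?thesis .
qed

lemma edge_energy_path:
  assumes path: "\<And>a b. a \<le> d \<Longrightarrow> b \<le> d \<Longrightarrow> adj a b \<longleftrightarrow> b = Suc a \<or> a = Suc b"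
  shows "edge_energy adj x {..<Suc d} {..<Suc d} = 2 * (\<Sum>j<d. (x j - x (Suc j))\<^sup>2)"
proof -
  define f where "f j = (x j - x (Suc j))\<^sup>2" for j
  have "edge_energy adj x {..<Suc d} {..<Suc d}
      = (\<Sum>a<Suc d. \<Sum>b<Suc d. (if b = Suc a then f a else 0) + (if a = Suc b then f b else 0))"
    unfolding edge_energy_def f_def using path
    by (intro sum.cong refl) (auto simp: power2_commute)
  also have "\<dots> = (\<Sum>a<Suc d. \<Sum>b<Suc d. if b = Suc a then f a else 0)
      + (\<Sum>b<Suc d. \<Sum>a<Suc d. if a = Suc b then f b else 0)"
    by (simp only: sum.distrib sum.swap[of "\<lambda>a b. if a = Suc b then f b else 0"])
  also have "\<dots> = 2 * (\<Sum>a<Suc d. if a < d then f a else 0)"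
    by (simp del: sum.lessThan_Suc)
  also have "(\<Sum>a<Suc d. if a < d then f a else 0) = (\<Sum>j<d. f j)"
    by (intro sum.mono_neutral_cong_right) auto
  finally show ?thesis unfolding f_def .
qed

lemma sum_if_eq_single:
  assumes "finite C" "w \<in> C"
  shows "(\<Sum>a\<in>C. if a = w then f else g) = f + (real (card C) - 1) * (g :: real)"
proof -
  have "(\<Sum>a\<in>C. if a = w then f else g) = f + (\<Sum>a\<in>C - {w}. g)"
    using assms by (simp add: sum.delta_remove)
  moreover have "0 < card C"
    using assms card_gt_0_iff by blast
  ultimately show ?thesis
    using assms by (simp add: card_Diff_singleton of_nat_diff)
qed

lemma edge_energy_clique_two_values:
  assumes clique: "\<And>a b. a \<in> C \<Longrightarrow> b \<in> C \<Longrightarrow> adj a b \<longleftrightarrow> a \<noteq> b"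
    and C: "finite C" "w \<in> C" and x: "\<And>a. a \<in> C \<Longrightarrow> x a = (if a = w then y else z)"
  shows "edge_energy adj x C C = 2 * (real (card C) - 1) * (y - z)\<^sup>2"
proof -
  have "edge_energy adj x C C
      = (\<Sum>a\<in>C. if a = w then (real (card C) - 1) * (y - z)\<^sup>2 else (y - z)\<^sup>2)"
    unfolding edge_energy_def
  proof (intro sum.cong refl)
    fix a assume a: "a \<in> C"
    have "(\<Sum>b\<in>C. if adj a b then (x a - x b)\<^sup>2 else 0)
        = (\<Sum>b\<in>C. if b = w then (if a = w then 0 else (y - z)\<^sup>2) else (if a = w then (y - z)\<^sup>2 else 0))"
      using a clique x by (intro sum.cong refl) (auto simp: power2_commute)
    also have "\<dots> = (if a = w then (real (card C) - 1) * (y - z)\<^sup>2 else (y - z)\<^sup>2)"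
      using sum_if_eq_single[OF C] by simp
    finally show "(\<Sum>b\<in>C. if adj a b then (x a - x b)\<^sup>2 else 0) = \<dots>" .
  qed
  also have "\<dots> = 2 * (real (card C) - 1) * (y - z)\<^sup>2"
    using sum_if_eq_single[OF C] by simp
  finally show ?thesis .
qed

section \<open>A weighted bound for the energy of a path\<close>

lemma power2_diff_le_weighted:
  fixes p q e :: real
  assumes "0 < e"
  shows "(p - q)\<^sup>2 \<le> (1 + e) * p\<^sup>2 + (1 + 1 / e) * q\<^sup>2"
proof -
  have "0 \<le> (e * p + q)\<^sup>2 / e"
    using assms by simp
  then show ?thesis
    using assms by (simp add: power2_eq_square field_simps)
qed

text \<open>Weights \<open>\<alpha>, \<beta>\<close> with \<open>(\<alpha> - 1)(\<beta> - 1) = 1\<close> for the bound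
  \<open>(x j - x (j+1))\<^sup>2 \<le> \<alpha> (x j)\<^sup>2 + \<beta> (x (j+1))\<^sup>2\<close> on the edges of a path with \<open>x c = 0\<close>.
  Every vertex receives total weight at most \<open>13/3\<close>, and the two neighbours of \<open>c\<close> at most
  \<open>11/4 = 13/3 - 19/12\<close>.\<close>

definition path_weight_left :: "nat \<Rightarrow> nat \<Rightarrow> real" where
  "path_weight_left c j =
    (if Suc (Suc j) = c then 7/3 else if Suc j = c then 1 else if j = c then 0
     else if j = Suc c then 7/4 else 2)"

definition path_weight_right :: "nat \<Rightarrow> nat \<Rightarrow> real" where
  "path_weight_right c j =
    (if Suc (Suc j) = c then 7/4 else if Suc j = c then 0 else if j = c then 1
     else if j = Suc c then 7/3 else 2)"

lemma path_edge_bound: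
  fixes x :: "nat \<Rightarrow> real"
  assumes x: "x c = 0"
  shows "(x j - x (Suc j))\<^sup>2 \<le> path_weight_left c j * (x j)\<^sup>2 + path_weight_right c j * (x (Suc j))\<^sup>2"
proof -
  consider "Suc (Suc j) = c" | "Suc j = c" | "j = c" | "j = Suc c"
    | "Suc (Suc j) \<noteq> c" "Suc j \<noteq> c" "j \<noteq> c" "j \<noteq> Suc c"
    by blast
  then show ?thesis
  proof cases
    case 1
    then show ?thesis
      using power2_diff_le_weighted[of "4/3" "x j" "x (Suc j)"]
      by (simp add: path_weight_left_def path_weight_right_def)
  next
    case 2
    then show ?thesis
      using x by (simp add: path_weight_left_def path_weight_right_def)
  next
    case 3
    then show ?thesis
      using x by (simp add: path_weight_left_def path_weight_right_def)
  next
    case 4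
    then show ?thesis
      using power2_diff_le_weighted[of "3/4" "x j" "x (Suc j)"]
      by (simp add: path_weight_left_def path_weight_right_def)
  next
    case 5
    then show ?thesis
      using power2_diff_le_weighted[of 1 "x j" "x (Suc j)"]
      by (simp add: path_weight_left_def path_weight_right_def)
  qed
qed

definition path_vertex_weight :: "nat \<Rightarrow> nat \<Rightarrow> nat \<Rightarrow> real" where
  "path_vertex_weight c d v =
    (if v < d then path_weight_left c v else 0) + (if 0 < v then path_weight_right c (v - 1) else 0)"

lemma path_energy_le_vertex_weights:
  fixes x :: "nat \<Rightarrow> real"
  assumes x: "x c = 0"
  shows "(\<Sum>j<d. (x j - x (Suc j))\<^sup>2) \<le> (\<Sum>v<Suc d. path_vertex_weight c d v * (x v)\<^sup>2)"
proof -
  have "(\<Sum>j<d. (x j - x (Suc j))\<^sup>2)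
      \<le> (\<Sum>j<d. path_weight_left c j * (x j)\<^sup>2) + (\<Sum>j<d. path_weight_right c j * (x (Suc j))\<^sup>2)"
    unfolding sum.distrib[symmetric] using path_edge_bound[of x c, OF x] by (rule sum_mono)
  also have "(\<Sum>j<d. path_weight_left c j * (x j)\<^sup>2)
      = (\<Sum>v<Suc d. (if v < d then path_weight_left c v else 0) * (x v)\<^sup>2)"
    by (simp only: sum.lessThan_Suc) simp
  also have "(\<Sum>j<d. path_weight_right c j * (x (Suc j))\<^sup>2)
      = (\<Sum>v<Suc d. (if 0 < v then path_weight_right c (v - 1) else 0) * (x v)\<^sup>2)"
    by (simp only: sum.lessThan_Suc_shift) simp
  finally show ?thesis
    unfolding path_vertex_weight_def sum.distrib[symmetric] by (simp add: algebra_simps)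
qed

lemma path_vertex_weight_le:
  "path_vertex_weight c d v + (if v = c - 1 \<or> v = Suc c then 19/12 else 0) \<le> 13/3"
proof -
  consider "v = c" | "Suc v = c" | "v = Suc c" | "v \<noteq> c" "Suc v \<noteq> c" "v \<noteq> Suc c"
    by blast
  then show ?thesis
    by cases (auto simp: path_vertex_weight_def path_weight_left_def path_weight_right_def)
qed

lemma path_energy_bound:
  fixes x :: "nat \<Rightarrow> real"
  assumes x: "x c = 0" and c: "c < d"
  shows "(\<Sum>j<d. (x j - x (Suc j))\<^sup>2) + 19/12 * ((x (c - 1))\<^sup>2 + (x (Suc c))\<^sup>2)
    \<le> 13/3 * (\<Sum>v<Suc d. (x v)\<^sup>2)"
proof -
  have "(\<Sum>v<Suc d. (if v = c - 1 \<or> v = Suc c then 19/12 else 0) * (x v)\<^sup>2)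
      = (\<Sum>v<Suc d. if v \<in> {c - 1, Suc c} then 19/12 * (x v)\<^sup>2 else 0)"
    by (intro sum.cong) auto
  also have "\<dots> = (\<Sum>v\<in>{..<Suc d} \<inter> {c - 1, Suc c}. 19/12 * (x v)\<^sup>2)"
    by (rule sum.inter_restrict[symmetric]) simp
  also have "{..<Suc d} \<inter> {c - 1, Suc c} = {c - 1, Suc c}"
    using c by auto
  finally have ends: "(\<Sum>v<Suc d. (if v = c - 1 \<or> v = Suc c then 19/12 else 0) * (x v)\<^sup>2)
      = 19/12 * ((x (c - 1))\<^sup>2 + (x (Suc c))\<^sup>2)"
    by (simp add: algebra_simps)
  have "(\<Sum>v<Suc d. path_vertex_weight c d v * (x v)\<^sup>2)
      + (\<Sum>v<Suc d. (if v = c - 1 \<or> v = Suc c then 19/12 else 0) * (x v)\<^sup>2)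
      \<le> (\<Sum>v<Suc d. 13/3 * (x v)\<^sup>2)"
    unfolding sum.distrib[symmetric] distrib_right[symmetric]
    by (intro sum_mono mult_right_mono path_vertex_weight_le) simp
  moreover have "(\<Sum>v<Suc d. 13/3 * (x v)\<^sup>2) = 13/3 * (\<Sum>v<Suc d. (x v)\<^sup>2)"
    by (rule sum_distrib_left[symmetric])
  ultimately show ?thesis
    using path_energy_le_vertex_weights[of x c d, OF x] ends by linarith
qed

section \<open>The test vectors for \<open>G\<^sub>n\<^sub>,\<^sub>d\<^sub>,\<^sub>t - v\<^sub>i w\<close>\<close>

text \<open>In the notation of the paper \<open>k = n - d - 1\<close>, \<open>c = t - 1\<close> is the vertex \<open>v\<^sub>t\<close>, so the clique
  is attached to \<open>c - 1, c, c + 1\<close>, and \<open>u = pv i\<close> is the path end of the deleted edge.\<close>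

context
  fixes n d k c u w :: nat
  assumes n_eq: "n = Suc d + k" and k: "2 \<le> k"
    and c: "0 < c" "c < d"
    and u: "u \<in> {c - 1, c, Suc c}"
    and w: "d < w" "w < n"
begin

abbreviation G' :: "nat \<Rightarrow> nat \<Rightarrow> bool" where
  "G' \<equiv> delete_edge (G_ndt n d (Suc c)) u w"

lemma G'_irrefl: "\<not> G' a a"
  unfolding delete_edge_def G_ndt_def by simp

lemma G'_sym: "G' a b = G' b a"
  unfolding delete_edge_def G_ndt_def by auto

lemma G'_path: "a \<le> d \<Longrightarrow> b \<le> d \<Longrightarrow> G' a b \<longleftrightarrow> b = Suc a \<or> a = Suc b"
  using n_eq w unfolding delete_edge_def G_ndt_def by auto

lemma G'_clique: "a \<in> {Suc d..<n} \<Longrightarrow> b \<in> {Suc d..<n} \<Longrightarrow> G' a b \<longleftrightarrow> a \<noteq> b"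
  using u c unfolding delete_edge_def G_ndt_def by auto

lemma G'_path_clique:
  "a \<le> d \<Longrightarrow> b \<in> {Suc d..<n} \<Longrightarrow> G' a b \<longleftrightarrow> a \<in> {c - 1, c, Suc c} \<and> \<not> (a = u \<and> b = w)"
  using c w unfolding delete_edge_def G_ndt_def pv_def by auto

text \<open>The coordinates \<open>b c\<close> and \<open>b (c + 1)\<close>, not needed on the path, are the values at
  \<open>w\<close> and on the rest of the clique.\<close>

definition test_vec :: "(nat \<Rightarrow> real) \<Rightarrow> nat \<Rightarrow> real" where
  "test_vec b a =
    (if a \<le> d then (if a = c then 0 else if a = Suc c then - b (c - 1) else b a)
     else if a = w then b c else b (Suc c))"

definition test_basis :: "nat \<Rightarrow> nat \<Rightarrow> real" where
  "test_basis l = test_vec (\<lambda>j. of_bool (j = l))"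

lemma lincomb_fun_test_basis: "lincomb_fun (Suc d) b test_basis = test_vec b"
proof
  fix a
  show "lincomb_fun (Suc d) b test_basis a = test_vec b a"
    using c unfolding lincomb_fun_def test_basis_def test_vec_def
    by (auto simp: sum_negf sum_mult_of_bool_eq simp del: sum.lessThan_Suc)
qed

lemma clique_energy_at_path_vertex:
  fixes b :: "nat \<Rightarrow> real"
  assumes a: "a \<le> d"
  shows "(\<Sum>v\<in>{Suc d..<n}. if G' a v then (test_vec b a - test_vec b v)\<^sup>2 else 0)
    = (if a \<in> {c - 1, c, Suc c}
       then (if a = u then 0 else (test_vec b a - b c)\<^sup>2) + (real k - 1) * (test_vec b a - b (Suc c))\<^sup>2
       else 0)"
proof (cases "a \<in> {c - 1, c, Suc c}")
  case True
  have C: "finite {Suc d..<n}" "w \<in> {Suc d..<n}" "card {Suc d..<n} = k"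
    using w n_eq by auto
  have "(\<Sum>v\<in>{Suc d..<n}. if G' a v then (test_vec b a - test_vec b v)\<^sup>2 else 0)
      = (\<Sum>v\<in>{Suc d..<n}. if v = w then (if a = u then 0 else (test_vec b a - b c)\<^sup>2)
          else (test_vec b a - b (Suc c))\<^sup>2)"
    using a True G'_path_clique[of a] by (intro sum.cong refl) (auto simp: test_vec_def)
  then show ?thesis
    using True sum_if_eq_single[OF C(1,2)] C(3) by simp
next
  case False
  then show ?thesis
    using a G'_path_clique[of a] by (auto intro: sum.neutral)
qed

lemma edge_energy_path_clique:
  fixes b :: "nat \<Rightarrow> real"
  defines "x \<equiv> test_vec b" and "s \<equiv> b (c - 1)" and "y \<equiv> b c" and "z \<equiv> b (Suc c)"
  shows "edge_energy G' x {..<Suc d} {Suc d..<n}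
    = 2 * s\<^sup>2 + 3 * y\<^sup>2 - (y - x u)\<^sup>2 + (real k - 1) * (2 * s\<^sup>2 + 3 * z\<^sup>2)"
proof -
  define h where "h a = (if a = u then 0 else (x a - y)\<^sup>2) + (real k - 1) * (x a - z)\<^sup>2" for a
  have "edge_energy G' x {..<Suc d} {Suc d..<n} = (\<Sum>a<Suc d. if a \<in> {c - 1, c, Suc c} then h a else 0)"
    unfolding edge_energy_def h_def x_def y_def z_def
    using clique_energy_at_path_vertex by (intro sum.cong) auto
  also have "\<dots> = sum h ({..<Suc d} \<inter> {c - 1, c, Suc c})"
    by (rule sum.inter_restrict[symmetric]) simp
  also have "{..<Suc d} \<inter> {c - 1, c, Suc c} = {c - 1, c, Suc c}"
    using c by auto
  also have "sum h {c - 1, c, Suc c} = h (c - 1) + h c + h (Suc c)"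
  proof -
    have "c - 1 \<notin> {c, Suc c}"
      using c by auto
    then show ?thesis by simp
  qed
  also have "\<dots> = 2 * s\<^sup>2 + 3 * y\<^sup>2 - (y - x u)\<^sup>2 + (real k - 1) * (2 * s\<^sup>2 + 3 * z\<^sup>2)"
  proof -
    have x: "x (c - 1) = s" "x c = 0" "x (Suc c) = - s"
      using c unfolding x_def s_def test_vec_def by auto
    have ne: "c - 1 \<noteq> c" "c - 1 \<noteq> Suc c" "c \<noteq> Suc c"
      using c by auto
    from u consider "u = c - 1" | "u = c" | "u = Suc c"
      by blast
    then show ?thesis
      using x ne by cases (simp_all add: h_def power2_eq_square algebra_simps)
  qed
  finally show ?thesis .
qed

lemma quad_form_test_vec:
  fixes b :: "nat \<Rightarrow> real"
  defines "x \<equiv> test_vec b" and "s \<equiv> b (c - 1)" and "y \<equiv> b c" and "z \<equiv> b (Suc c)"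
  shows "quad_form n (laplacian n G') x = (\<Sum>j<d. (x j - x (Suc j))\<^sup>2)
    + (2 * s\<^sup>2 + 3 * y\<^sup>2 - (y - x u)\<^sup>2 + (real k - 1) * (2 * s\<^sup>2 + 3 * z\<^sup>2))
    + (real k - 1) * (y - z)\<^sup>2"
proof -
  have split: "{..<n} = {..<Suc d} \<union> {Suc d..<n}"
    using n_eq by auto
  have clique: "edge_energy G' x {Suc d..<n} {Suc d..<n} = 2 * (real k - 1) * (y - z)\<^sup>2"
    using n_eq w G'_clique
    by (subst edge_energy_clique_two_values[where w = w and y = y and z = z])
      (auto simp: x_def y_def z_def test_vec_def)
  have "2 * quad_form n (laplacian n G') x = edge_energy G' x {..<n} {..<n}"
    by (rule quad_form_laplacian[OF G'_irrefl G'_sym])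
  also have "\<dots> = edge_energy G' x {..<Suc d} {..<Suc d} + 2 * edge_energy G' x {..<Suc d} {Suc d..<n}
      + edge_energy G' x {Suc d..<n} {Suc d..<n}"
  proof -
    have "edge_energy G' x {Suc d..<n} {..<Suc d} = edge_energy G' x {..<Suc d} {Suc d..<n}"
      by (rule edge_energy_commute[OF G'_sym])
    moreover have disj: "{..<Suc d} \<inter> {Suc d..<n} = {}"
      by auto
    ultimately show ?thesis
      unfolding split edge_energy_Un_left[OF finite_lessThan finite_atLeastLessThan disj]
        edge_energy_Un_right[OF finite_lessThan finite_atLeastLessThan disj]
      by simp
  qed
  also have "edge_energy G' x {..<Suc d} {..<Suc d} = 2 * (\<Sum>j<d. (x j - x (Suc j))\<^sup>2)"
    by (rule edge_energy_path[OF G'_path])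
  also have "edge_energy G' x {..<Suc d} {Suc d..<n}
      = 2 * s\<^sup>2 + 3 * y\<^sup>2 - (y - x u)\<^sup>2 + (real k - 1) * (2 * s\<^sup>2 + 3 * z\<^sup>2)"
    unfolding x_def s_def y_def z_def by (rule edge_energy_path_clique)
  finally show ?thesis
    unfolding clique by (simp add: algebra_simps)
qed

lemma dot_fun_test_vec:
  "dot_fun n (test_vec b) (test_vec b)
    = (\<Sum>a<Suc d. (test_vec b a)\<^sup>2) + (b c)\<^sup>2 + (real k - 1) * (b (Suc c))\<^sup>2"
proof -
  have split: "{..<n} = {..<Suc d} \<union> {Suc d..<n}"
    using n_eq by auto
  have C: "finite {Suc d..<n}" "w \<in> {Suc d..<n}" "card {Suc d..<n} = k"
    using w n_eq by auto
  have "(\<Sum>a\<in>{Suc d..<n}. (test_vec b a)\<^sup>2) = (\<Sum>a\<in>{Suc d..<n}. if a = w then (b c)\<^sup>2 else (b (Suc c))\<^sup>2)"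
    unfolding test_vec_def by (intro sum.cong) auto
  also have "\<dots> = (b c)\<^sup>2 + (real k - 1) * (b (Suc c))\<^sup>2"
    using sum_if_eq_single[OF C(1,2)] C(3) by simp
  finally have "(\<Sum>a\<in>{Suc d..<n}. (test_vec b a)\<^sup>2) = (b c)\<^sup>2 + (real k - 1) * (b (Suc c))\<^sup>2" .
  moreover have "dot_fun n (test_vec b) (test_vec b)
      = (\<Sum>a<Suc d. (test_vec b a)\<^sup>2) + (\<Sum>a\<in>{Suc d..<n}. (test_vec b a)\<^sup>2)"
    unfolding dot_fun_def split power2_eq_square by (rule sum.union_disjoint) auto
  ultimately show ?thesis
    by simp
qed

lemma test_vec_excess_eq:
  fixes b :: "nat \<Rightarrow> real"
  defines "x \<equiv> test_vec b" and "s \<equiv> b (c - 1)" and "y \<equiv> b c" and "z \<equiv> b (Suc c)"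
    and "P \<equiv> \<Sum>a<Suc d. (test_vec b a)\<^sup>2"
    and "E \<equiv> \<Sum>j<d. (test_vec b j - test_vec b (Suc j))\<^sup>2"
  shows "quad_form n (laplacian n G') x - (real k + 3) * dot_fun n x x
    = E - (real k + 3) * P + 2 * real k * s\<^sup>2 - (y + (real k - 1) * z)\<^sup>2 - (y - x u)\<^sup>2"
proof -
  have quad: "quad_form n (laplacian n G') x
      = E + (2 * s\<^sup>2 + 3 * y\<^sup>2 - (y - x u)\<^sup>2 + (real k - 1) * (2 * s\<^sup>2 + 3 * z\<^sup>2))
        + (real k - 1) * (y - z)\<^sup>2"
    unfolding x_def E_def s_def y_def z_def by (rule quad_form_test_vec)
  have norm: "dot_fun n x x = P + y\<^sup>2 + (real k - 1) * z\<^sup>2"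
    unfolding x_def P_def y_def z_def by (rule dot_fun_test_vec)
  show ?thesis
    unfolding quad norm by (simp add: power2_eq_square algebra_simps)
qed

lemma path_excess_le:
  fixes b :: "nat \<Rightarrow> real"
  defines "x \<equiv> test_vec b" and "s \<equiv> b (c - 1)"
    and "P \<equiv> \<Sum>a<Suc d. (test_vec b a)\<^sup>2"
    and "E \<equiv> \<Sum>j<d. (test_vec b j - test_vec b (Suc j))\<^sup>2"
  shows "E - (real k + 3) * P + 2 * real k * s\<^sup>2 \<le> - P / 4"
proof -
  have x: "x (c - 1) = s" "x c = 0" "x (Suc c) = - s"
    using c unfolding x_def s_def test_vec_def by auto
  have path: "E + 19/12 * (2 * s\<^sup>2) \<le> 13/3 * P"
    using path_energy_bound[of x c d] x c unfolding E_def P_def x_def by simp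
  have "(\<Sum>a\<in>{c - 1, Suc c}. (x a)\<^sup>2) \<le> P"
    unfolding P_def x_def using c by (intro sum_mono2) auto
  then have "2 * s\<^sup>2 \<le> P"
    using x by simp
  then have "(real k - 19/12) * (2 * s\<^sup>2) \<le> (real k - 19/12) * P"
    using k by (intro mult_left_mono) auto
  with path show ?thesis
    by (simp add: algebra_simps)
qed

lemma test_vec_remainder_pos:
  fixes b :: "nat \<Rightarrow> real"
  assumes nz: "\<exists>l<Suc d. b l \<noteq> 0"
  defines "x \<equiv> test_vec b" and "y \<equiv> b c" and "z \<equiv> b (Suc c)"
    and "P \<equiv> \<Sum>a<Suc d. (test_vec b a)\<^sup>2"
  shows "0 < P / 4 + (y + (real k - 1) * z)\<^sup>2 + (y - x u)\<^sup>2"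
proof (cases "P = 0")
  case False
  moreover have "0 \<le> P"
    unfolding P_def by (intro sum_nonneg) simp
  ultimately show ?thesis
    by (simp add: add_pos_nonneg)
next
  case True
  then have "\<forall>a\<in>{..<Suc d}. (x a)\<^sup>2 = 0"
    unfolding P_def x_def by (subst (asm) sum_nonneg_eq_0_iff) auto
  then have path_zero: "x a = 0" if "a < Suc d" for a
    using that by simp
  have "y \<noteq> 0 \<or> z \<noteq> 0"
  proof (rule ccontr)
    assume "\<not> (y \<noteq> 0 \<or> z \<noteq> 0)"
    then have "b l = 0" if "l < Suc d" for l
      using that path_zero[OF that] unfolding x_def y_def z_def test_vec_def
      by (auto split: if_splits)
    with nz show False by blast
  qed
  have "x u = 0"
    using u c path_zero by auto
  have "0 < (y + (real k - 1) * z)\<^sup>2 + (y - x u)\<^sup>2"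
  proof (cases "y = 0")
    case True
    with \<open>y \<noteq> 0 \<or> z \<noteq> 0\<close> k have "(real k - 1) * z \<noteq> 0"
      by auto
    with True show ?thesis
      by (simp add: add_pos_nonneg)
  next
    case False
    with \<open>x u = 0\<close> show ?thesis
      by (simp add: add_nonneg_pos)
  qed
  with True show ?thesis
    by simp
qed

lemma rayleigh_test_vec_less:
  assumes "\<exists>l<Suc d. b l \<noteq> 0"
  shows "quad_form n (laplacian n G') (test_vec b) < (real k + 3) * dot_fun n (test_vec b) (test_vec b)"
  using test_vec_excess_eq[of b] path_excess_le[of b] test_vec_remainder_pos[OF assms] by linarith

lemma lap_mu_delete_edge_less: "lap_mu n G' (n - d) < real (n - d + 2)"
proof -
  have "eigenvalues_desc (laplacian n G') ! (n - Suc d) < real k + 3"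
    using n_eq rayleigh_test_vec_less
    by (intro eigenvalues_desc_less_if_rayleigh_less[OF laplacian_carrier laplacian_symmetric[OF G'_sym],
        where q = test_basis]) (simp_all add: lincomb_fun_test_basis)
  then show ?thesis
    unfolding lap_mu_def n_eq by simp
qed

end

theorem lemma4p4:
  fixes n d t w i :: nat
  assumes "2 \<le> d" and "d + 3 \<le> n" and "2 \<le> t" and "t \<le> d"
    and "d < w" and "w < n"
    and "i \<in> {t - 1, t, t + 1}"
  shows "lap_mu n (delete_edge (G_ndt n d t) (pv i) w) (n - d) < real (n - d + 2)"
proof -
  have "lap_mu n (delete_edge (G_ndt n d (Suc (t - 1))) (pv i) w) (n - d) < real (n - d + 2)"
    by (rule lap_mu_delete_edge_less[where k = "n - Suc d"]) (use assms in \<open>auto simp: pv_def\<close>)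
  then show ?thesis
    using \<open>2 \<le> t\<close> by simp
qed

end
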